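(* Let $\{\mathbb{P}_\theta\}$ be a parametric model with log-likelihood $\ell_\theta$, true parameter $\theta_0$, and parameter split into two blocks $\theta=(\theta_1,\theta_2)$; let $G$ be a compact group acting on the sample space with Haar probability measure $\mathbb{Q}$, and suppose the invariant parameter set $\Theta_G$ is $\{\theta:\theta_2=0\}$. Let $I(\theta)=\mathbb{E}_\theta\nabla\ell_\theta\nabla\ell_\theta^\top$ be the Fisher information with blocks $I_{11},I_{12},I_{21},I_{22}$ corresponding to $(\theta_1,\theta_2)$, assumed invertible, and let $\bar I(\theta)=\mathrm{Cov}_\theta\big(\mathbb{E}_{g\sim\mathbb{Q}}\nabla\ell_\theta(gX)\big)$, assumed invertible. Suppose the augmented MLE (aMLE) has asymptotic covariance $I(\theta_0)^{-1}\bar I(\theta_0)I(\theta_0)^{-1}$ and the constrained MLE (cMLE) has asymptotic covariance $I_{11}(\theta_0)^{-1}$ for estimating $\theta_1$. Define $$M_\theta=\begin{bmatrix}I_{11}(\theta)^{-1}&(I(\theta)^{-1})_{1\cdot}\\(I(\theta)^{-1})_{\cdot1}&\bar I(\theta)^{-1}\end{bmatrix},$$ where $(I^{-1})_{1\cdot}$ is the submatrix of $I^{-1}$ consisting of the rows indexed by the coordinates of $\theta_1$ and $(I^{-1})_{\cdot1}$ its transpose (the corresponding columns). Then the aMLE is asymptotically more efficient than the cMLE in estimating $\theta_1$, i.e. $[I(\theta_0)^{-1}\bar I(\theta_0)I(\theta_0)^{-1}]_{11}\preceq I_{11}(\theta_0)^{-1}$, if and only if $M_{\theta_0}$ is positive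 semidefinite.
   Context: The augmented MLE maximizes $\sum_i\int_G\ell_\theta(gX_i)\,d\mathbb{Q}(g)$ over $\theta$; the constrained MLE maximizes $\sum_i\ell_\theta(X_i)$ over $\theta\in\Theta_G$. $[A]_{11}$ denotes the top-left block of $A$ corresponding to $\theta_1$; $\preceq$ is the Loewner order. *)

theory Defs
  imports "HOL-Probability.Probability"
begin

definition psd :: "real^'n^'n \<Rightarrow> bool" where
  "psd A \<longleftrightarrow> transpose A = A \<and> (\<forall>x. 0 \<le> x \<bullet> (A *v x))"

definition loewner_le :: "real^'n^'n \<Rightarrow> real^'n^'n \<Rightarrow> bool" where
  "loewner_le A B \<longleftrightarrow> psd (B - A)"

text \<open>Top-left block (coordinates of theta_1) of a matrix indexed by 'p1 + 'p2.\<close>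
definition blk11 :: "'c^('p1::finite + 'p2::finite)^('p1 + 'p2) \<Rightarrow> 'c^'p1^'p1" where
  "blk11 A = (\<chi> i j. A $ Inl i $ Inl j)"

definition fisher_info :: "'x measure \<Rightarrow> ('x \<Rightarrow> real^'n) \<Rightarrow> real^'n^'n" where
  "fisher_info P s = (\<chi> i j. \<integral>x. s x $ i * s x $ j \<partial>P)"

definition avg_score :: "'g measure \<Rightarrow> ('g \<Rightarrow> 'x \<Rightarrow> 'x) \<Rightarrow> ('x \<Rightarrow> real^'n) \<Rightarrow> 'x \<Rightarrow> real^'n" where
  "avg_score Q act s x = (\<chi> i. \<integral>g. s (act g x) $ i \<partial>Q)"

definition cov_matrix :: "'x measure \<Rightarrow> ('x \<Rightarrow> real^'n) \<Rightarrow> real^'n^'n" where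
  "cov_matrix P v = (\<chi> i j. \<integral>x. (v x $ i - (\<integral>y. v y $ i \<partial>P)) * (v x $ j - (\<integral>y. v y $ j \<partial>P)) \<partial>P)"

definition M_mat :: "real^('p1::finite + 'p2::finite)^('p1 + 'p2) \<Rightarrow> real^('p1 + 'p2)^('p1 + 'p2)
      \<Rightarrow> real^('p1 + ('p1 + 'p2))^('p1 + ('p1 + 'p2))" where
  "M_mat I Ibar = (\<chi> a b. case (a, b) of
       (Inl i, Inl j) \<Rightarrow> matrix_inv (blk11 I) $ i $ j
     | (Inl i, Inr k) \<Rightarrow> matrix_inv I $ Inl i $ k
     | (Inr k, Inl j) \<Rightarrow> matrix_inv I $ k $ Inl j
     | (Inr k, Inr l) \<Rightarrow> matrix_inv Ibar $ k $ l)"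

end

theory Submission
  imports Defs
begin

text \<open>Since the Fisher information \<open>I\<close> is symmetric, so is \<open>I\<inverse>\<close>, and the top-left block of
  \<open>I\<inverse> Ibar I\<inverse>\<close> is \<open>R Ibar R\<^sup>T\<close> with \<open>R = (I\<inverse>)\<^sub>1\<^sub>.\<close>. Thus the Loewner inequality says that
  \<open>I\<^sub>1\<^sub>1\<inverse> - R Ibar R\<^sup>T\<close> is positive semidefinite, and this is the Schur complement of the block
  \<open>Ibar\<inverse>\<close> in \<open>M\<close>. As a covariance matrix \<open>Ibar\<close> is positive semidefinite, hence so is
  \<open>Ibar\<inverse>\<close>, and completing the square in the quadratic form of \<open>M\<close> shows that \<open>M\<close> is
  positive semidefinite exactly when its Schur complement is.\<close>

definition block_matrix ::
  "real^'a^'a \<Rightarrow> real^'b^'a \<Rightarrow> real^'a^'b \<Rightarrow> real^'b^'b \<Rightarrow> real^('a + 'b)^('a + 'b)" where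
  "block_matrix P R R' S = (\<chi> a b. case (a, b) of
       (Inl i, Inl j) \<Rightarrow> P $ i $ j | (Inl i, Inr l) \<Rightarrow> R $ i $ l
     | (Inr k, Inl j) \<Rightarrow> R' $ k $ j | (Inr k, Inr l) \<Rightarrow> S $ k $ l)"

lemma block_matrix_nth [simp]:
  "block_matrix P R R' S $ Inl i $ Inl j = P $ i $ j"
  "block_matrix P R R' S $ Inl i $ Inr l = R $ i $ l"
  "block_matrix P R R' S $ Inr k $ Inl j = R' $ k $ j"
  "block_matrix P R R' S $ Inr k $ Inr l = S $ k $ l"
  by (simp_all add: block_matrix_def)

definition vec_Inl :: "'c^('a::finite + 'b::finite) \<Rightarrow> 'c^'a" where
  "vec_Inl z = (\<chi> i. z $ Inl i)"

definition vec_Inr :: "'c^('a::finite + 'b::finite) \<Rightarrow> 'c^'b" where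
  "vec_Inr z = (\<chi> k. z $ Inr k)"

definition vec_join :: "'c^'a::finite \<Rightarrow> 'c^'b::finite \<Rightarrow> 'c^('a + 'b)" where
  "vec_join u w = (\<chi> a. case a of Inl i \<Rightarrow> u $ i | Inr k \<Rightarrow> w $ k)"

lemma vec_Inl_join [simp]: "vec_Inl (vec_join u w) = u"
  and vec_Inr_join [simp]: "vec_Inr (vec_join u w) = w"
  by (simp_all add: vec_Inl_def vec_Inr_def vec_join_def vec_eq_iff)

lemma quadratic_form_block_matrix:
  fixes z :: "real^('a::finite + 'b::finite)"
  shows "z \<bullet> (block_matrix P R R' S *v z) =
    vec_Inl z \<bullet> (P *v vec_Inl z) + vec_Inl z \<bullet> (R *v vec_Inr z)
    + vec_Inr z \<bullet> (R' *v vec_Inl z) + vec_Inr z \<bullet> (S *v vec_Inr z)"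
  unfolding inner_vec_def matrix_vector_mult_def vec_Inl_def vec_Inr_def
  by (simp add: sum.Plus[of UNIV UNIV, simplified] sum_distrib_left ring_distribs sum.distrib)

lemma transpose_block_matrix:
  "transpose (block_matrix P R R' S) =
     block_matrix (transpose P) (transpose R') (transpose R) (transpose S)"
  unfolding vec_eq_iff by (auto simp: transpose_def block_matrix_def split: sum.split)

lemma block_matrix_eq_iff:
  "block_matrix P R R' S = block_matrix P' Q Q' S' \<longleftrightarrow> P = P' \<and> R = Q \<and> R' = Q' \<and> S = S'"
proof
  assume eq: "block_matrix P R R' S = block_matrix P' Q Q' S'"
  have "block_matrix P R R' S $ a $ b = block_matrix P' Q Q' S' $ a $ b" for a b
    by (simp add: eq)
  from this[of "Inl _" "Inl _"] this[of "Inl _" "Inr _"] this[of "Inr _" "Inl _"] this[of "Inr _" "Inr _"]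
  show "P = P' \<and> R = Q \<and> R' = Q' \<and> S = S'"
    by (simp add: vec_eq_iff)
qed simp

lemma matrix_inv_right: "invertible A \<Longrightarrow> A ** matrix_inv A = mat 1"
  and matrix_inv_left: "invertible A \<Longrightarrow> matrix_inv A ** A = mat 1"
  for A :: "'a::comm_semiring_1^'n^'n"
  unfolding invertible_def matrix_inv_def by (metis (mono_tags, lifting) someI_ex)+

lemma matrix_inv_unique:
  fixes A :: "'a::comm_semiring_1^'n^'n"
  assumes "A ** B = mat 1" "B ** A = mat 1"
  shows "matrix_inv A = B"
proof -
  have inv: "invertible A" using assms unfolding invertible_def by blast
  have "matrix_inv A = matrix_inv A ** (A ** B)" by (simp add: assms(1))
  also have "\<dots> = B" by (simp add: matrix_mul_assoc matrix_inv_left[OF inv])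
  finally show ?thesis .
qed

lemma invertible_matrix_inv: "invertible A \<Longrightarrow> invertible (matrix_inv A)"
  and matrix_inv_matrix_inv: "invertible A \<Longrightarrow> matrix_inv (matrix_inv A) = A"
  for A :: "'a::comm_semiring_1^'n^'n"
  using matrix_inv_left[of A] matrix_inv_right[of A] matrix_inv_unique[of "matrix_inv A" A]
  by (auto simp: invertible_def)

lemma transpose_matrix_inv:
  fixes A :: "'a::comm_semiring_1^'n^'n"
  assumes "invertible A"
  shows "transpose (matrix_inv A) = matrix_inv (transpose A)"
  by (rule matrix_inv_unique[symmetric])
     (simp_all flip: matrix_transpose_mul add: matrix_inv_left matrix_inv_right assms)

lemma psd_matrix_inv:
  fixes A :: "real^'n^'n"
  assumes "psd A" "invertible A"
  shows "psd (matrix_inv A)"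
  unfolding psd_def
proof
  show "transpose (matrix_inv A) = matrix_inv A"
    using assms by (simp add: psd_def transpose_matrix_inv)
  show "\<forall>x. 0 \<le> x \<bullet> (matrix_inv A *v x)"
  proof
    fix x
    have "x \<bullet> (matrix_inv A *v x) = (matrix_inv A *v x) \<bullet> (A *v (matrix_inv A *v x))"
      by (simp add: matrix_vector_mul_assoc matrix_inv_right assms(2) inner_commute)
    then show "0 \<le> x \<bullet> (matrix_inv A *v x)"
      using assms(1) by (simp add: psd_def)
  qed
qed

lemma quadratic_form_block_matrix_complete_square:
  fixes P :: "real^'a::finite^'a" and R :: "real^'b::finite^'a" and S B :: "real^'b^'b"
  assumes SB: "S ** B = mat 1" and S_sym: "transpose S = S"
  defines "c \<equiv> \<lambda>u. B *v (transpose R *v u)"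
  shows "z \<bullet> (block_matrix P R (transpose R) S *v z) =
    vec_Inl z \<bullet> ((P - R ** B ** transpose R) *v vec_Inl z)
    + (vec_Inr z + c (vec_Inl z)) \<bullet> (S *v (vec_Inr z + c (vec_Inl z)))"
proof -
  define u w where "u = vec_Inl z" and "w = vec_Inr z"
  define t where "t = transpose R *v u"
  have c: "c u = B *v t" by (simp add: c_def t_def)
  have "S *v c u = t" by (simp add: c matrix_vector_mul_assoc SB)
  moreover have "c u \<bullet> (S *v w) = (S *v c u) \<bullet> w"
    by (metis S_sym dot_lmul_matrix transpose_matrix_vector)
  moreover have "u \<bullet> ((R ** B ** transpose R) *v u) = t \<bullet> c u"
    by (simp add: t_def c flip: matrix_vector_mul_assoc add: dot_lmul_matrix)
  moreover have "u \<bullet> (R *v w) = t \<bullet> w" by (simp add: t_def dot_lmul_matrix)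
  moreover have "w \<bullet> (transpose R *v u) = t \<bullet> w" by (simp add: t_def inner_commute)
  ultimately show ?thesis
    unfolding quadratic_form_block_matrix u_def[symmetric] w_def[symmetric]
    by (simp add: matrix_vector_right_distrib matrix_vector_mult_diff_rdistrib
        inner_add_left inner_add_right inner_diff_right inner_commute[of w t] inner_commute[of "c u" t])
qed

lemma psd_block_matrix_iff_schur_complement:
  fixes P :: "real^'a::finite^'a" and R :: "real^'b::finite^'a" and S :: "real^'b^'b"
  assumes S_psd: "psd S" and S_inv: "invertible S"
  shows "psd (block_matrix P R (transpose R) S) \<longleftrightarrow> psd (P - R ** matrix_inv S ** transpose R)"
proof -
  define B where "B = matrix_inv S"
  have S_sym: "transpose S = S" using S_psd by (simp add: psd_def)
  have B_sym: "transpose B = B"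
    using S_inv S_sym by (simp add: B_def transpose_matrix_inv)
  have SB: "S ** B = mat 1" using S_inv by (simp add: B_def matrix_inv_right)
  note square = quadratic_form_block_matrix_complete_square[OF SB S_sym, where P=P and R=R]
  have "transpose (block_matrix P R (transpose R) S) = block_matrix P R (transpose R) S
      \<longleftrightarrow> transpose (P - R ** B ** transpose R) = P - R ** B ** transpose R"
  proof -
    have "transpose (R ** B ** transpose R) = R ** B ** transpose R"
      by (simp add: matrix_transpose_mul B_sym matrix_mul_assoc)
    then have "transpose (P - R ** B ** transpose R) = transpose P - R ** B ** transpose R"
      by (simp add: transpose_def vec_eq_iff)
    then show ?thesis
      by (simp add: transpose_block_matrix block_matrix_eq_iff S_sym)
  qed
  moreover have "(\<forall>z. 0 \<le> z \<bullet> (block_matrix P R (transpose R) S *v z))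
      \<longleftrightarrow> (\<forall>u. 0 \<le> u \<bullet> ((P - R ** B ** transpose R) *v u))"
  proof
    assume block: "\<forall>z. 0 \<le> z \<bullet> (block_matrix P R (transpose R) S *v z)"
    show "\<forall>u. 0 \<le> u \<bullet> ((P - R ** B ** transpose R) *v u)"
    proof
      fix u
      have "0 \<le> vec_join u (- (B *v (transpose R *v u))) \<bullet>
          (block_matrix P R (transpose R) S *v vec_join u (- (B *v (transpose R *v u))))"
        using block by blast
      then show "0 \<le> u \<bullet> ((P - R ** B ** transpose R) *v u)"
        by (simp add: square)
    qed
  next
    assume "\<forall>u. 0 \<le> u \<bullet> ((P - R ** B ** transpose R) *v u)"
    then show "\<forall>z. 0 \<le> z \<bullet> (block_matrix P R (transpose R) S *v z)"
      using S_psd by (simp add: square psd_def)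
  qed
  ultimately show ?thesis by (simp add: psd_def B_def)
qed

lemma vec_Inl_matrix_mul: "vec_Inl (A ** C) = vec_Inl A ** C"
  by (simp add: vec_Inl_def matrix_matrix_mult_def vec_eq_iff)

lemma blk11_matrix_mul: "blk11 (A ** C) = vec_Inl A ** transpose (vec_Inl (transpose C))"
  by (simp add: blk11_def vec_Inl_def matrix_matrix_mult_def transpose_def vec_eq_iff)

lemma M_mat_eq_block_matrix:
  "M_mat I Ibar = block_matrix (matrix_inv (blk11 I)) (vec_Inl (matrix_inv I))
     (transpose (vec_Inl (transpose (matrix_inv I)))) (matrix_inv Ibar)"
  by (simp add: M_mat_def block_matrix_def vec_Inl_def transpose_def vec_eq_iff split: sum.split)

lemma borel_measurable_avg_score:
  fixes act :: "'g \<Rightarrow> 'x \<Rightarrow> 'x" and s :: "'x \<Rightarrow> real^'n"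
  assumes "sigma_finite_measure Q"
    and [measurable]: "(\<lambda>(g, x). act g x) \<in> Q \<Otimes>\<^sub>M \<mu> \<rightarrow>\<^sub>M \<mu>" "s \<in> borel_measurable \<mu>"
  shows "(\<lambda>x. avg_score Q act s x $ i) \<in> borel_measurable \<mu>"
proof -
  interpret sigma_finite_measure Q by fact
  have [measurable]: "(\<lambda>p. act (snd p) (fst p)) \<in> \<mu> \<Otimes>\<^sub>M Q \<rightarrow>\<^sub>M \<mu>"
    using measurable_compose[OF measurable_pair_swap' assms(2)] by (simp add: case_prod_beta)
  have [measurable]: "(\<lambda>x. s x $ i) \<in> borel_measurable \<mu>"
    using measurable_compose[OF assms(3) borel_measurable_nth] .
  show ?thesis unfolding avg_score_def vec_lambda_beta by measurable
qed

lemma transpose_fisher_info: "transpose (fisher_info P s) = fisher_info P s"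
  by (simp add: fisher_info_def transpose_def vec_eq_iff mult.commute)

lemma integrable_mult_of_square_integrable:
  fixes f g :: "'x \<Rightarrow> real"
  assumes [measurable]: "f \<in> borel_measurable M" "g \<in> borel_measurable M"
    and "integrable M (\<lambda>x. (f x)\<^sup>2)" "integrable M (\<lambda>x. (g x)\<^sup>2)"
  shows "integrable M (\<lambda>x. f x * g x)"
proof (rule Bochner_Integration.integrable_bound)
  show "integrable M (\<lambda>x. (f x)\<^sup>2 + (g x)\<^sup>2)" using assms(3,4) by simp
  have "\<bar>a * b\<bar> \<le> a\<^sup>2 + b\<^sup>2" for a b :: real
    using sum_squares_bound[of a b] sum_squares_bound[of "-a" b] by (simp add: abs_le_iff)
  then show "AE x in M. norm (f x * g x) \<le> norm ((f x)\<^sup>2 + (g x)\<^sup>2)" by simp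
qed measurable

lemma (in finite_measure) psd_cov_matrix:
  fixes v :: "'a \<Rightarrow> real^'n"
  assumes meas: "\<And>i. (\<lambda>x. v x $ i) \<in> borel_measurable M"
    and L2: "\<And>i. integrable M (\<lambda>x. (v x $ i)\<^sup>2)"
  shows "psd (cov_matrix M v)"
proof -
  define w where "w i x = v x $ i - (\<integral>y. v y $ i \<partial>M)" for i x
  have w_meas: "w i \<in> borel_measurable M" for i
    unfolding w_def using meas by measurable
  have "integrable M (\<lambda>x. v x $ i)" for i
    using square_integrable_imp_integrable[OF meas L2] .
  then have w_L2: "integrable M (\<lambda>x. (w i x)\<^sup>2)" for i
    using L2[of i] by (simp add: w_def power2_diff)
  have cov: "cov_matrix M v $ i $ j = (\<integral>x. w i x * w j x \<partial>M)" for i j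
    by (simp add: cov_matrix_def w_def)
  have "0 \<le> a \<bullet> (cov_matrix M v *v a)" for a
  proof -
    have "a \<bullet> (cov_matrix M v *v a) = (\<Sum>i\<in>UNIV. \<Sum>j\<in>UNIV. a$i * a$j * (\<integral>x. w i x * w j x \<partial>M))"
      by (simp add: inner_vec_def matrix_vector_mult_def cov sum_distrib_left algebra_simps)
    also have "\<dots> = (\<integral>x. (\<Sum>i\<in>UNIV. \<Sum>j\<in>UNIV. a$i * a$j * (w i x * w j x)) \<partial>M)"
      using integrable_mult_of_square_integrable[OF w_meas w_meas w_L2 w_L2]
      by (simp add: integral_sum)
    also have "\<dots> = (\<integral>x. (\<Sum>i\<in>UNIV. a$i * w i x)\<^sup>2 \<partial>M)"
      by (simp add: power2_eq_square sum_product algebra_simps)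
    finally show ?thesis by simp
  qed
  moreover have "transpose (cov_matrix M v) = cov_matrix M v"
    by (simp add: cov_matrix_def transpose_def vec_eq_iff mult.commute)
  ultimately show ?thesis by (simp add: psd_def)
qed

theorem proposition4p9:
  fixes \<mu> :: "'x measure"
    and Pth :: "real^('p1::finite + 'p2::finite) \<Rightarrow> 'x measure"
    and ll :: "real^('p1 + 'p2) \<Rightarrow> 'x \<Rightarrow> real"
    and \<theta>0 :: "real^('p1 + 'p2)"
    and s :: "'x \<Rightarrow> real^('p1 + 'p2)"
    and Q :: "'g measure"
    and act :: "'g \<Rightarrow> 'x \<Rightarrow> 'x"
  assumes model: "\<And>\<theta>. Pth \<theta> = density \<mu> (\<lambda>x. ennreal (exp (ll \<theta> x)))"
    and prob: "prob_space (Pth \<theta>0)"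
    and score: "\<And>x. x \<in> space \<mu> \<Longrightarrow> ((\<lambda>\<theta>. ll \<theta> x) has_derivative (\<lambda>h. s x \<bullet> h)) (at \<theta>0)"
    and s_meas: "s \<in> borel_measurable \<mu>"
    and s_L2: "\<And>i. integrable (Pth \<theta>0) (\<lambda>x. (s x $ i)\<^sup>2)"
    and Q_prob: "prob_space Q"
    and act_meas: "(\<lambda>(g, x). act g x) \<in> Q \<Otimes>\<^sub>M \<mu> \<rightarrow>\<^sub>M \<mu>"
    and orbit_int: "\<And>x i. x \<in> space \<mu> \<Longrightarrow> integrable Q (\<lambda>g. s (act g x) $ i)"
    and avg_L2: "\<And>i. integrable (Pth \<theta>0) (\<lambda>x. (avg_score Q act s x $ i)\<^sup>2)"
    and I_inv: "invertible (fisher_info (Pth \<theta>0) s)"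
    and Ibar_inv: "invertible (cov_matrix (Pth \<theta>0) (avg_score Q act s))"
  shows "loewner_le
           (blk11 (matrix_inv (fisher_info (Pth \<theta>0) s)
                   ** cov_matrix (Pth \<theta>0) (avg_score Q act s)
                   ** matrix_inv (fisher_info (Pth \<theta>0) s)))
           (matrix_inv (blk11 (fisher_info (Pth \<theta>0) s)))
         \<longleftrightarrow> psd (M_mat (fisher_info (Pth \<theta>0) s) (cov_matrix (Pth \<theta>0) (avg_score Q act s)))"
proof -
  \<comment> \<open>Only the symmetry of \<open>I\<close> and the positive semidefiniteness of \<open>Ibar\<close> enter.\<close>
  define I Ibar where "I = fisher_info (Pth \<theta>0) s" and "Ibar = cov_matrix (Pth \<theta>0) (avg_score Q act s)"
  define A where "A = matrix_inv I"
  note Ibar_invertible = Ibar_inv[folded Ibar_def]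
  have A_sym: "transpose A = A"
    using I_inv by (simp add: A_def I_def transpose_matrix_inv transpose_fisher_info)
  have "sets (Pth \<theta>0) = sets \<mu>" by (simp add: model)
  then have "(\<lambda>x. avg_score Q act s x $ i) \<in> borel_measurable (Pth \<theta>0)" for i
    using borel_measurable_avg_score[OF prob_space_imp_sigma_finite[OF Q_prob] act_meas s_meas]
    by (simp cong: measurable_cong_sets)
  then have "psd Ibar"
    unfolding Ibar_def by (rule finite_measure.psd_cov_matrix[OF prob_space.finite_measure[OF prob] _ avg_L2])
  then have Ibar_inv_psd: "psd (matrix_inv Ibar)"
    using Ibar_invertible by (rule psd_matrix_inv)
  have blk11_eq: "blk11 (A ** Ibar ** A) = vec_Inl A ** Ibar ** transpose (vec_Inl A)"
    by (simp add: blk11_matrix_mul vec_Inl_matrix_mul A_sym)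
  have M_eq: "M_mat I Ibar =
      block_matrix (matrix_inv (blk11 I)) (vec_Inl A) (transpose (vec_Inl A)) (matrix_inv Ibar)"
    by (simp add: M_mat_eq_block_matrix A_def[symmetric] A_sym)
  show ?thesis
    unfolding loewner_le_def I_def[symmetric] Ibar_def[symmetric] A_def[symmetric] blk11_eq M_eq
      psd_block_matrix_iff_schur_complement[OF Ibar_inv_psd invertible_matrix_inv[OF Ibar_invertible]]
      matrix_inv_matrix_inv[OF Ibar_invertible] ..
qed

end
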